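(* Let $R$ be a semiprime ring which is both $2$-torsion free and $3$-torsion free, and let $T:R\to R$ be an additive map such that $T(x)x^3=0$ and $T(x^4)=0$ for all $x\in R$. Then $T(xy)=T(x)y$ for all $x,y\in R$.
   Context: $R$ is an associative ring. $R$ is $k$-torsion free if $kx=0$ implies $x=0$ for all $x\in R$. $R$ is semiprime if $aRa=\{0\}$ implies $a=0$. *)

theory Defs
  imports Main
begin

text \<open>An associative ring (not necessarily unital) is modelled by the type class ring.
  The integer multiple k x is the k-fold sum x + ... + x.\<close>

definition nsmul :: "nat \<Rightarrow> 'a::ring \<Rightarrow> 'a" where
  "nsmul k x = ((+) x ^^ k) 0"

definition semiprime :: "'a::ring itself \<Rightarrow> bool" where
  "semiprime _ \<longleftrightarrow> (\<forall>a::'a. (\<forall>r::'a. a * r * a = 0) \<longrightarrow> a = 0)"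

definition torsion_free :: "nat \<Rightarrow> 'a::ring itself \<Rightarrow> bool" where
  "torsion_free k _ \<longleftrightarrow> (\<forall>x::'a. nsmul k x = 0 \<longrightarrow> x = 0)"

end

theory Submission
  imports Defs "HOL.Modules"
begin

text \<open>Linearizing \<open>T(x)x\<^sup>3 = 0\<close> and separating the homogeneous components with the help of
  2- and 3-torsion freeness gives \<open>T(y)x\<^sup>3 + T(x)(yx\<^sup>2 + xyx + x\<^sup>2y) = 0\<close>. Substituting \<open>x\<^sup>4\<close> for
  \<open>x\<close> and using \<open>T(x\<^sup>4) = 0\<close>, every \<open>T(y)\<close> annihilates all twelfth powers from the left. Hence
  the right ideal \<open>T(y)R\<close> is nil of bounded index, since \<open>(T(y)r)\<^sup>1\<^sup>3 = T(y)(rT(y))\<^sup>1\<^sup>2r = 0\<close>.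
  By Levitzki's lemma such a right ideal of a semiprime ring is zero, so \<open>T(y)RT(y) = 0\<close>
  and \<open>T = 0\<close>.\<close>

text \<open>The ring need not have a unit, so \<open>ppow x k\<close> stands for \<open>x\<^sup>k\<^sup>+\<^sup>1\<close>.\<close>

fun ppow :: "'a::ring \<Rightarrow> nat \<Rightarrow> 'a" where
  "ppow x 0 = x"
| "ppow x (Suc k) = ppow x k * x"

definition right_ideal :: "'a::ring set \<Rightarrow> bool" where
  "right_ideal I \<longleftrightarrow> (\<forall>u\<in>I. \<forall>v\<in>I. u + v \<in> I) \<and> (\<forall>u\<in>I. \<forall>r. u * r \<in> I)"

lemma ppow_Suc_left: "ppow x (Suc k) = x * ppow x k"
  by (induction k) (simp_all add: mult.assoc)

lemma ppow_mult_rotate: "ppow (b * r) (Suc k) = b * ppow (r * b) k * r"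
  by (induction k) (simp_all add: mult.assoc)

lemma right_ideal_ppow:
  assumes "right_ideal I" "u \<in> I"
  shows "ppow u k \<in> I"
  using assms by (induction k) (simp_all add: right_ideal_def)

lemma right_ideal_principal: "right_ideal (range ((*) b))"
proof -
  have "b * u + b * v = b * (u + v)" "b * u * r = b * (u * r)" for u v r
    by (simp_all add: distrib_left mult.assoc)
  then show ?thesis unfolding right_ideal_def by auto
qed

lemma ppow_add_left_annihilated:
  assumes "a * v = 0"
  shows "a * ppow (a + v) k = ppow a (Suc k)"
proof (induction k)
  case 0
  show ?case using assms by (simp add: distrib_left)
next
  case (Suc k)
  have "a * ppow (a + v) (Suc k) = ppow a (Suc k) * (a + v)"
    by (metis Suc mult.assoc ppow.simps(2))
  also have "\<dots> = ppow a (Suc (Suc k))"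
    using assms by (simp add: distrib_left mult.assoc)
  finally show ?case .
qed

lemma ppow_add_annihilated:
  assumes "a * v = 0"
  shows "ppow (a + v) (Suc k) = ppow a (Suc k) + v * ppow (a + v) k"
  by (simp only: ppow_Suc_left distrib_right ppow_add_left_annihilated[OF assms])

lemma eq_zero_if_mult_eq_neg_nilpotent:
  fixes z m :: "'a::ring"
  assumes "z * m = - z" "ppow m K = 0"
  shows "z = 0"
proof -
  have "z * ppow m K = (if even K then - z else z)"
    by (induction K) (use assms(1) in \<open>auto simp: mult.assoc[symmetric]\<close>)
  with assms(2) show ?thesis by (simp split: if_splits)
qed

text \<open>The heart of Levitzki's lemma: in a right ideal of nil index \<open>k + 2\<close>, each \<open>y = a\<^sup>k\<^sup>+\<^sup>1\<close>
  satisfies \<open>yRy = 0\<close>. With \<open>v = yx\<close> one has \<open>av = 0\<close>, and expanding \<open>(a + v)\<^sup>k\<^sup>+\<^sup>2 = 0\<close>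
  shows that \<open>z = yxy\<close> satisfies \<open>zm = -z\<close> for a nilpotent \<open>m\<close>.\<close>

lemma nil_right_ideal_sandwich:
  assumes I: "right_ideal I"
    and nil: "\<forall>u\<in>I. ppow u (Suc k) = 0"
    and "a \<in> I"
  shows "ppow a k * x * ppow a k = 0"
proof -
  define y where "y = ppow a k"
  define v where "v = y * x"
  define c where "c = a + v"
  have "y \<in> I" unfolding y_def using I \<open>a \<in> I\<close> by (rule right_ideal_ppow)
  then have "v \<in> I" using I unfolding v_def right_ideal_def by blast
  then have "c \<in> I" using I \<open>a \<in> I\<close> unfolding c_def right_ideal_def by blast
  have "a * v = ppow a (Suc k) * x"
    unfolding v_def y_def ppow_Suc_left by (simp add: mult.assoc)
  then have av: "a * v = 0" using nil \<open>a \<in> I\<close> by simp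
  have vc: "v * ppow c k = 0"
    using ppow_add_annihilated[OF av, of k] nil \<open>a \<in> I\<close> \<open>c \<in> I\<close> unfolding c_def by simp
  show ?thesis
  proof (cases k)
    case 0
    have "v * v = 0" using nil \<open>v \<in> I\<close> 0 by simp
    with vc 0 show ?thesis unfolding c_def v_def y_def by (simp add: distrib_left)
  next
    case (Suc j)
    define z where "z = y * x * y"
    define m where "m = x * ppow c j"
    have "ppow c k = y + v * ppow c j"
      using ppow_add_annihilated[OF av, of j] Suc unfolding c_def y_def by simp
    then have "z + z * m = 0"
      using vc unfolding z_def m_def v_def by (simp add: distrib_left mult.assoc)
    then have "z * m = - z" by (simp add: eq_neg_iff_add_eq_0 add.commute)
    moreover have "ppow m (Suc (Suc k)) = 0"
    proof -
      have "ppow c j * x \<in> I" using I right_ideal_ppow[OF I \<open>c \<in> I\<close>] unfolding right_ideal_def by blast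
      with nil have "ppow (ppow c j * x) (Suc k) = 0" by blast
      then show ?thesis unfolding m_def ppow_mult_rotate by simp
    qed
    ultimately show ?thesis
      using eq_zero_if_mult_eq_neg_nilpotent unfolding z_def y_def by blast
  qed
qed

lemma semiprime_nil_right_ideal_zero:
  assumes "semiprime TYPE('a::ring)" "right_ideal I"
    and "\<forall>u\<in>I. ppow u k = 0" "(a::'a) \<in> I"
  shows "a = 0"
  using assms(3,4)
proof (induction k arbitrary: a)
  case 0
  then show ?case by simp
next
  case (Suc k)
  have "\<forall>u\<in>I. ppow u k = 0"
    using nil_right_ideal_sandwich[OF assms(2) Suc.prems(1)] assms(1)
    unfolding semiprime_def by blast
  with Suc.IH Suc.prems(2) show ?case by blast
qed

lemma semiprime_annihilator_of_powers_zero: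
  fixes b :: "'a::ring"
  assumes sp: "semiprime TYPE('a)"
    and ann: "\<And>x. b * ppow x n = 0"
  shows "b = 0"
proof -
  have "ppow (b * r) (Suc n) = 0" for r
    unfolding ppow_mult_rotate ann by simp
  then have "\<forall>u\<in>range ((*) b). ppow u (Suc n) = 0" by blast
  then have "b * r = 0" for r
    by (rule semiprime_nil_right_ideal_zero[OF sp right_ideal_principal]) simp
  then show ?thesis using sp unfolding semiprime_def by (metis mult_zero_left)
qed

lemma torsion_free_2D:
  assumes "torsion_free 2 TYPE('a::ring)" "x + x = 0"
  shows "(x::'a) = 0"
proof -
  have "nsmul 2 x = x + x" by (simp add: nsmul_def numeral_eq_Suc)
  with assms show ?thesis unfolding torsion_free_def by metis
qed

lemma torsion_free_3D:
  assumes "torsion_free 3 TYPE('a::ring)" "x + x + x = 0"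
  shows "(x::'a) = 0"
proof -
  have "nsmul 3 x = x + x + x" by (simp add: nsmul_def numeral_eq_Suc add.assoc)
  with assms show ?thesis unfolding torsion_free_def by metis
qed

text \<open>\<open>A\<^sub>i y\<close> is the component of \<open>T(x + y)(x + y)\<^sup>3\<close> of degree \<open>i\<close> in \<open>y\<close>; comparing the
  expansions at \<open>y\<close>, \<open>-y\<close> and \<open>2y\<close> isolates \<open>A\<^sub>1 y\<close>.\<close>

lemma additive_cube_annihilator_linearized:
  fixes T :: "'a::ring \<Rightarrow> 'a"
  assumes "additive T"
    and tf2: "torsion_free 2 TYPE('a)"
    and tf3: "torsion_free 3 TYPE('a)"
    and cube: "\<And>x. T x * (x * x * x) = 0"
  shows "T y * (x * x * x) + T x * (y * x * x + x * y * x + x * x * y) = 0"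
proof -
  interpret additive T by (fact assms(1))
  define A1 where "A1 y = T y * (x * x * x) + T x * (y * x * x + x * y * x + x * x * y)" for y
  define A2 where "A2 y = T y * (y * x * x + x * y * x + x * x * y)
    + T x * (y * y * x + y * x * y + x * y * y)" for y
  define A3 where "A3 y = T y * (y * y * x + y * x * y + x * y * y) + T x * (y * y * y)" for y
  have expand: "A1 y + A2 y + A3 y = 0" for y
  proof -
    have "T (x + y) * ((x + y) * (x + y) * (x + y))
        = T x * (x * x * x) + (A1 y + A2 y + A3 y) + T y * (y * y * y)"
      unfolding A1_def A2_def A3_def add by (simp add: distrib_left distrib_right add_ac mult.assoc)
    then show ?thesis using cube[of "x + y"] cube[of x] cube[of y] by simp
  qed
  have "A2 y + A2 y = (A1 y + A2 y + A3 y) + (A1 (- y) + A2 (- y) + A3 (- y))"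
    unfolding A1_def A2_def A3_def minus by (simp add: algebra_simps)
  also have "\<dots> = 0" by (simp only: expand add_0)
  finally have A2: "A2 y = 0" using tf2 by (rule torsion_free_2D[rotated])
  then have A13: "A1 y = - A3 y" using expand[of y] by (simp add: eq_neg_iff_add_eq_0)
  have "A1 (y + y) = A1 y + A1 y" "A2 (y + y) = (A2 y + A2 y) + (A2 y + A2 y)"
    "A3 (y + y) = ((A3 y + A3 y) + (A3 y + A3 y)) + ((A3 y + A3 y) + (A3 y + A3 y))"
    unfolding A1_def A2_def A3_def add by (simp_all add: distrib_left distrib_right add_ac mult.assoc)
  then have "(A3 y + A3 y + A3 y) + (A3 y + A3 y + A3 y) = A1 (y + y) + A2 (y + y) + A3 (y + y)"
    unfolding A2 A13 by (simp add: algebra_simps)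
  also have "\<dots> = 0" by (rule expand)
  finally have "A3 y = 0" using tf2 tf3 by (blast intro: torsion_free_2D torsion_free_3D)
  then show ?thesis using A13 unfolding A1_def by simp
qed

theorem lemma2p5:
  fixes T :: "'a::ring \<Rightarrow> 'a"
  assumes "semiprime TYPE('a)"
    and "torsion_free 2 TYPE('a)"
    and "torsion_free 3 TYPE('a)"
    and "\<And>x y. T (x + y) = T x + T y"
    and "\<And>x. T x * (x * x * x) = 0"
    and "\<And>x. T (x * x * x * x) = 0"
  shows "\<forall>x y. T (x * y) = T x * y"
proof -
  have "additive T" using assms(4) by unfold_locales
  note linearized = additive_cube_annihilator_linearized[OF this assms(2,3,5)]
  have "T y * ppow x 11 = 0" for x y
  proof -
    have "ppow x 11 = (x * x * x * x) * (x * x * x * x) * (x * x * x * x)"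
      by (simp add: numeral_eq_Suc mult.assoc)
    then show ?thesis using linearized[of y "x * x * x * x"] assms(6)[of x] by simp
  qed
  then have "T y = 0" for y by (rule semiprime_annihilator_of_powers_zero[OF assms(1)])
  then show ?thesis by simp
qed

end
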